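(* Let $N\ge2$, $1<p<N$, and let $\alpha_n$, $\varepsilon_n$ be sequences with $\alpha_n\to\alpha>0$ and $\varepsilon_n\to0$ as $n\to+\infty$. Let $u_n:=u_{\varepsilon_n,\alpha_n}$. Then $\|u_n-U_\alpha\|_X\to0$ as $n\to+\infty$.
   Context: $U_\alpha(x)=C_{N,p,\alpha}(1+|x|^{\frac{p+\alpha}{p-1}})^{-\frac{N-p}{p+\alpha}}$ with $C_{N,p,\alpha}=\big((N+\alpha)(\frac{N-p}{p-1})^{p-1}\big)^{\frac{N-p}{p(p+\alpha)}}$. For $\varepsilon>0$, $u_{\varepsilon,\alpha}(x):=U_\alpha(x)-U_\alpha(1/\varepsilon)$ if $|x|\le1/\varepsilon$ and $u_{\varepsilon,\alpha}(x):=0$ if $|x|>1/\varepsilon$, where $U_\alpha(1/\varepsilon)$ is the value of $U_\alpha$ at $|x|=1/\varepsilon$. Fix $\gamma\in\big(\frac{N(N-p)}{Np-(N-p)},\frac{N-p}{p-1}\big)$, $\|g\|_\gamma:=\sup_{x}(1+|x|)^\gamma|g(x)|$, $X:=\{g\in D^{1,p}(\mathbb{R}^N)\cap L^\infty(\mathbb{R}^N):\|g\|_\gamma<\infty\}$ with $\|g\|_X=\max\{\|\nabla g\|_{L^p(\mathbb{R}^N)},\|g\|_\gamma\}$; $D^{1,p}(\mathbb{R}^N)$ is the completion of $C_c^\infty$ under $\|\nabla g\|_{L^p}$. *)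

theory Defs
  imports "HOL-Analysis.Analysis"
begin

definition C_const :: "real \<Rightarrow> real \<Rightarrow> real \<Rightarrow> real" where
  "C_const N p \<alpha> =
     ((N + \<alpha>) * ((N - p) / (p - 1)) powr (p - 1)) powr ((N - p) / (p * (p + \<alpha>)))"

definition U_prof :: "real \<Rightarrow> real \<Rightarrow> real \<Rightarrow> real \<Rightarrow> real" where
  "U_prof N p \<alpha> r =
     C_const N p \<alpha> * (1 + r powr ((p + \<alpha>) / (p - 1))) powr (- (N - p) / (p + \<alpha>))"

definition U_fun :: "real \<Rightarrow> real \<Rightarrow> real \<Rightarrow> real ^ 'n \<Rightarrow> real" where
  "U_fun N p \<alpha> x = U_prof N p \<alpha> (norm x)"

definition u_trunc :: "real \<Rightarrow> real \<Rightarrow> real \<Rightarrow> real \<Rightarrow> real ^ 'n \<Rightarrow> real" where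
  "u_trunc N p \<epsilon> \<alpha> x =
     (if norm x \<le> 1 / \<epsilon> then U_prof N p \<alpha> (norm x) - U_prof N p \<alpha> (1 / \<epsilon>) else 0)"

text \<open>Pointwise gradient (where it exists; for the Lipschitz functions considered
  here it coincides a.e. with the weak gradient).\<close>
definition grad :: "(real ^ 'n \<Rightarrow> real) \<Rightarrow> real ^ 'n \<Rightarrow> real ^ 'n" where
  "grad g x = (SOME G. (g has_derivative (\<lambda>h. G \<bullet> h)) (at x))"

definition grad_Lp_norm :: "real \<Rightarrow> (real ^ 'n \<Rightarrow> real) \<Rightarrow> ennreal" where
  "grad_Lp_norm p g =
     (let I = (\<integral>\<^sup>+ x. ennreal (norm (grad g x) powr p) \<partial>lborel)
      in if I = \<infinity> then \<infinity> else ennreal (enn2real I powr (1 / p)))"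

definition weighted_norm :: "real \<Rightarrow> (real ^ 'n \<Rightarrow> real) \<Rightarrow> ennreal" where
  "weighted_norm \<gamma> g = (SUP x. ennreal ((1 + norm x) powr \<gamma> * \<bar>g x\<bar>))"

definition X_norm :: "real \<Rightarrow> real \<Rightarrow> (real ^ 'n \<Rightarrow> real) \<Rightarrow> ennreal" where
  "X_norm p \<gamma> g = max (grad_Lp_norm p g) (weighted_norm \<gamma> g)"

end

(*
  Off the sphere |x| = 1/eps_n the gradient of u_n - U_alpha is radial with modulus
  |1_{r < 1/eps_n} U'_{alpha_n}(r) - U'_alpha(r)|. It tends to 0 pointwise, and as long as
  C_{N,p,alpha_n} stays bounded it is dominated by a multiple of (1 + r)^(-(N-1)/(p-1)),
  whose p-th power is integrable on R^N because p < N; dominated convergence gives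
  the gradient part.

  For the weighted part, U_beta(r) <= C_beta r^(-(N-p)/(p-1)) and gamma < (N-p)/(p-1) make
  (1 + r)^gamma U_beta(r) uniformly small for large r, while on compact sets
  (1 + r)^gamma U_beta converges uniformly as beta -> alpha. The truncation constant
  U_{alpha_n}(1/eps_n), weighted by (1 + r)^gamma with r <= 1/eps_n, is bounded by the
  same tail estimate at r = 1/eps_n.
*)
theory Submission
  imports Defs
begin

definition U_prof_deriv :: "real \<Rightarrow> real \<Rightarrow> real \<Rightarrow> real \<Rightarrow> real" where
  "U_prof_deriv N p \<alpha> r = - ((N - p) / (p - 1)) * C_const N p \<alpha> *
     (1 + r powr ((p + \<alpha>) / (p - 1))) powr (- (N - p) / (p + \<alpha>) - 1) *
     r powr ((p + \<alpha>) / (p - 1) - 1)"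

lemma C_const_pos: "1 < p \<Longrightarrow> p < N \<Longrightarrow> 0 < \<alpha> \<Longrightarrow> 0 < C_const N p \<alpha>"
  unfolding C_const_def by simp

lemma U_prof_nonneg: "1 < p \<Longrightarrow> p < N \<Longrightarrow> 0 < \<alpha> \<Longrightarrow> 0 \<le> U_prof N p \<alpha> r"
  using C_const_pos unfolding U_prof_def by fastforce

lemma U_prof_has_real_derivative:
  assumes "1 < p" "p < N" "0 < \<alpha>" "0 < r"
  shows "(U_prof N p \<alpha> has_real_derivative U_prof_deriv N p \<alpha> r) (at r)"
proof -
  define A where "A = (p + \<alpha>) / (p - 1)"
  define e where "e = - (N - p) / (p + \<alpha>)"
  have "0 < 1 + r powr A"
    by (simp add: add_pos_nonneg)
  then have "(U_prof N p \<alpha> has_real_derivative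
      C_const N p \<alpha> * (e * (1 + r powr A) powr (e - 1) * (A * r powr (A - 1)))) (at r)"
    unfolding U_prof_def[abs_def] A_def[symmetric] e_def[symmetric] using assms
    by (auto intro!: derivative_eq_intros)
  moreover have "e * A = - ((N - p) / (p - 1))"
    using assms by (simp add: e_def A_def minus_divide_left)
  ultimately show ?thesis
    unfolding U_prof_deriv_def A_def[symmetric] e_def[symmetric]
    by (metis mult.assoc mult.left_commute)
qed

lemma U_prof_exponent_eq:
  fixes N p \<alpha> :: real
  assumes "1 < p" "0 < \<alpha>"
  shows "- (N - p) / (p + \<alpha>) = - (((N - p) / (p - 1)) / ((p + \<alpha>) / (p - 1)))"
  using assms by (simp add: minus_divide_left)

lemma U_prof_le_powr:
  assumes "1 < p" "p < N" "0 < \<alpha>" "0 < r"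
  shows "U_prof N p \<alpha> r \<le> C_const N p \<alpha> * r powr (- ((N - p) / (p - 1)))"
proof -
  define A where "A = (p + \<alpha>) / (p - 1)"
  define k where "k = (N - p) / (p - 1)"
  have "0 < A" "0 < k" using assms by (auto simp: A_def k_def)
  have "(1 + r powr A) powr (- (k / A)) \<le> (r powr A) powr (- (k / A))"
    using \<open>0 < A\<close> \<open>0 < k\<close> assms(4) by (intro powr_mono2') auto
  also have "\<dots> = r powr (- k)"
    using \<open>0 < A\<close> by (simp add: powr_powr)
  finally show ?thesis
    using C_const_pos[OF assms(1-3)]
    unfolding U_prof_def U_prof_exponent_eq[OF assms(1,3)] A_def[symmetric] k_def[symmetric]
    by (simp add: mult_left_mono)
qed

lemma one_plus_powr_decay_le:
  fixes A k r :: real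
  assumes "1 \<le> A" "0 \<le> k" "0 < r"
  shows "(1 + r powr A) powr (- (k / A) - 1) * r powr (A - 1) \<le> (2 / (1 + r)) powr (k + 1)"
proof -
  have "0 \<le> k / A"
    using assms by simp
  then have exponent_neg: "- (k / A) - 1 < 0"
    by linarith
  show ?thesis
  proof (cases "r \<le> 1")
    case True
    have "(1 + r powr A) powr (- (k / A) - 1) \<le> 1"
      using powr_less_one[OF _ exponent_neg] assms by (simp add: less_imp_le)
    moreover have "r powr (A - 1) \<le> 1"
      using True assms by (intro powr_le1) auto
    moreover have "1 \<le> (2 / (1 + r)) powr (k + 1)"
      using True assms by (intro ge_one_powr_ge_zero) auto
    ultimately show ?thesis
      by (meson mult_le_one order.trans powr_ge_zero)
  next
    case False
    have "(1 + r powr A) powr (- (k / A) - 1) \<le> (r powr A) powr (- (k / A) - 1)"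
      using exponent_neg assms by (intro powr_mono2') auto
    also have "\<dots> = r powr (A * (- (k / A) - 1))"
      by (simp add: powr_powr)
    also have "A * (- (k / A) - 1) = - k - A"
      using assms by (simp add: field_simps)
    finally have "(1 + r powr A) powr (- (k / A) - 1) * r powr (A - 1)
        \<le> r powr (- k - A) * r powr (A - 1)"
      by (intro mult_right_mono) auto
    also have "\<dots> = r powr (- (k + 1))"
      by (simp add: powr_add[symmetric])
    also have "\<dots> = (1 / r) powr (k + 1)"
      using powr_minus_divide[of r "k + 1"] assms by (simp add: powr_divide)
    also have "\<dots> \<le> (2 / (1 + r)) powr (k + 1)"
      using False assms by (intro powr_mono2) (auto simp: field_simps)
    finally show ?thesis .
  qed
qed

lemma abs_U_prof_deriv_le:
  assumes "1 < p" "p < N" "0 < \<alpha>" "0 < r"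
  shows "\<bar>U_prof_deriv N p \<alpha> r\<bar>
    \<le> (N - p) / (p - 1) * C_const N p \<alpha> * (2 / (1 + r)) powr ((N - p) / (p - 1) + 1)"
proof -
  define A where "A = (p + \<alpha>) / (p - 1)"
  define k where "k = (N - p) / (p - 1)"
  have "1 \<le> A" "0 < k" using assms by (auto simp: A_def k_def)
  have "0 \<le> k * C_const N p \<alpha>"
    using \<open>0 < k\<close> C_const_pos[OF assms(1-3)] by simp
  then have "k * C_const N p \<alpha> * ((1 + r powr A) powr (- (k / A) - 1) * r powr (A - 1))
      \<le> k * C_const N p \<alpha> * (2 / (1 + r)) powr (k + 1)"
    using one_plus_powr_decay_le[OF \<open>1 \<le> A\<close> _ assms(4), of k] \<open>0 < k\<close>
    by (intro mult_left_mono) auto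
  then show ?thesis
    using \<open>0 < k\<close> C_const_pos[OF assms(1-3)]
    unfolding U_prof_deriv_def U_prof_exponent_eq[OF assms(1,3)] A_def[symmetric] k_def[symmetric]
    by (simp add: abs_mult mult.assoc)
qed

lemma isCont_C_const: "1 < p \<Longrightarrow> p < N \<Longrightarrow> 0 < \<alpha> \<Longrightarrow> isCont (C_const N p) \<alpha>"
  unfolding C_const_def[abs_def] by (auto intro!: continuous_intros)

lemma isCont_U_prof_deriv:
  assumes "1 < p" "p < N" "0 < \<alpha>" "0 < r"
  shows "isCont (\<lambda>a. U_prof_deriv N p a r) \<alpha>"
proof -
  have "0 < 1 + r powr ((p + \<alpha>) / (p - 1))"
    by (simp add: add_pos_nonneg)
  then show ?thesis
    unfolding U_prof_deriv_def C_const_def using assms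
    by (intro continuous_intros) simp_all
qed

lemma continuous_on_weighted_U_prof:
  assumes "1 < p" "p < N" "0 < a\<^sub>0"
  shows "continuous_on ({a\<^sub>0..a\<^sub>1} \<times> {0..T})
    (\<lambda>z. (1 + snd z) powr \<gamma> * U_prof N p (fst z) (snd z))"
proof (intro continuous_on_mult)
  show "continuous_on ({a\<^sub>0..a\<^sub>1} \<times> {0..T}) (\<lambda>z. (1 + snd z) powr \<gamma>)"
    by (intro continuous_intros) auto
  show "continuous_on ({a\<^sub>0..a\<^sub>1} \<times> {0..T}) (\<lambda>z. U_prof N p (fst z) (snd z))"
  proof -
    have "1 + y powr e \<noteq> 0" for y e :: real
      by (simp add: add_nonneg_eq_0_iff)
    with assms show ?thesis
      unfolding U_prof_def C_const_def by (intro continuous_on_powr' continuous_intros) simp_all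
  qed
qed

lemma nn_integral_decay_halfline_finite:
  fixes q :: real
  assumes "1 < q"
  shows "(\<integral>\<^sup>+t. ennreal ((2 / (1 + t)) powr q) * indicator {0..} t \<partial>lborel) < \<infinity>"
proof -
  define F where "F t = - (2 powr q) * (1 + t) powr (1 - q) / (q - 1)" for t :: real
  have "(\<integral>\<^sup>+t. ennreal ((2 / (1 + t)) powr q) * indicator {0..} t \<partial>lborel) = ennreal (0 - F 0)"
  proof (rule nn_integral_FTC_atLeast)
    show "DERIV F t :> (2 / (1 + t)) powr q" if "0 \<le> t" for t
    proof -
      have "DERIV F t :> - (2 powr q) * ((1 - q) * (1 + t) powr (1 - q - 1) * 1) / (q - 1)"
        unfolding F_def[abs_def] using that assms by (auto intro!: derivative_eq_intros)
      moreover have "- (2 powr q) * ((1 - q) * (1 + t) powr (1 - q - 1) * 1) / (q - 1)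
          = (2 / (1 + t)) powr q"
        using assms that by (simp add: powr_divide powr_minus field_simps)
      ultimately show ?thesis by simp
    qed
    have "((\<lambda>t. (1 + t) powr (1 - q)) \<longlongrightarrow> 0) at_top"
      using assms
      by (intro tendsto_neg_powr filterlim_tendsto_add_at_top[OF tendsto_const filterlim_ident]) auto
    then have "(F \<longlongrightarrow> - (2 powr q) * 0 / (q - 1)) at_top"
      unfolding F_def[abs_def] by (intro tendsto_intros) (use assms in auto)
    then show "(F \<longlongrightarrow> 0) at_top"
      by simp
  qed auto
  then show ?thesis
    by simp
qed

lemma nn_integral_decay_real_finite:
  fixes q :: real
  assumes "1 < q"
  shows "(\<integral>\<^sup>+t. ennreal ((2 / (1 + \<bar>t\<bar>)) powr q) \<partial>lborel) < \<infinity>"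
proof -
  define h where "h t = ennreal ((2 / (1 + t)) powr q) * indicator {0..} t" for t :: real
  have h_borel: "h \<in> borel_measurable borel"
    unfolding h_def by measurable
  have "(\<integral>\<^sup>+t. ennreal ((2 / (1 + \<bar>t\<bar>)) powr q) \<partial>lborel) \<le> (\<integral>\<^sup>+t. h t + h (- t) \<partial>lborel)"
    unfolding h_def by (intro nn_integral_mono) (auto split: split_indicator)
  also have "\<dots> = (\<integral>\<^sup>+t. h t \<partial>lborel) + (\<integral>\<^sup>+t. h (- t) \<partial>lborel)"
    using h_borel by (intro nn_integral_add) auto
  also have "(\<integral>\<^sup>+t. h (- t) \<partial>lborel) = (\<integral>\<^sup>+t. h t \<partial>lborel)"
    using nn_integral_real_affine[OF h_borel, of "-1" 0] by simp
  also have "(\<integral>\<^sup>+t. h t \<partial>lborel) + (\<integral>\<^sup>+t. h t \<partial>lborel) < \<infinity>"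
    using nn_integral_decay_halfline_finite[OF assms] unfolding h_def by simp
  finally show ?thesis .
qed

text \<open>Since \<open>\<bar>x \<bullet> b\<bar> \<le> norm x\<close>, the radial weight is dominated by a product of
  one-dimensional weights with exponent \<open>s / DIM('a) > 1\<close>, whose integral factorises.\<close>
lemma nn_integral_decay_euclidean_finite:
  fixes s :: real
  assumes "real DIM('a) < s"
  shows "(\<integral>\<^sup>+x. ennreal ((2 / (1 + norm (x::'a::euclidean_space))) powr s) \<partial>lborel) < \<infinity>"
proof -
  define q where "q = s / DIM('a)"
  have "1 < q"
    using assms unfolding q_def by simp
  have product_bound: "(2 / (1 + norm x)) powr s \<le> (\<Prod>b\<in>Basis. (2 / (1 + \<bar>x \<bullet> b\<bar>)) powr q)"
    for x :: 'a
  proof -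
    have "(2 / (1 + norm x)) powr s = ((2 / (1 + norm x)) powr q) ^ DIM('a)"
      unfolding q_def by (subst powr_power) (auto simp: add_nonneg_eq_0_iff)
    also have "\<dots> = (\<Prod>b\<in>(Basis::'a set). (2 / (1 + norm x)) powr q)"
      by simp
    also have "\<dots> \<le> (\<Prod>b\<in>Basis. (2 / (1 + \<bar>x \<bullet> b\<bar>)) powr q)"
      by (intro prod_mono conjI powr_mono2 divide_left_mono)
        (use \<open>1 < q\<close> Basis_le_norm[of _ x] in \<open>auto intro!: add_pos_nonneg mult_pos_pos\<close>)
    finally show ?thesis .
  qed
  have "(\<integral>\<^sup>+x. ennreal ((2 / (1 + norm (x::'a))) powr s) \<partial>lborel)
      \<le> (\<integral>\<^sup>+x. (\<Prod>b\<in>Basis. ennreal ((2 / (1 + \<bar>(x::'a) \<bullet> b\<bar>)) powr q)) \<partial>lborel)"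
    by (intro nn_integral_mono) (simp add: prod_ennreal ennreal_leI product_bound)
  also have "\<dots> = (\<Prod>b\<in>(Basis::'a set). (\<integral>\<^sup>+t. ennreal ((2 / (1 + \<bar>t\<bar>)) powr q) \<partial>lborel))"
    by (rule nn_integral_lborel_prod) auto
  also have "\<dots> < \<infinity>"
    using nn_integral_decay_real_finite[OF \<open>1 < q\<close>] by (simp add: power_less_top_ennreal)
  finally show ?thesis .
qed

lemma grad_eqI:
  fixes g :: "real ^ 'n \<Rightarrow> real"
  assumes "GDERIV g x :> G"
  shows "grad g x = G"
  unfolding grad_def
proof (rule some_equality)
  show G: "(g has_derivative (\<lambda>h. G \<bullet> h)) (at x)"
    using assms unfolding gderiv_def by (simp add: inner_commute)
  fix G' assume "(g has_derivative (\<lambda>h. G' \<bullet> h)) (at x)"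
  from has_derivative_unique[OF this G] show "G' = G"
    by (metis vector_eq_rdot)
qed

lemma norm_grad_radial:
  fixes x :: "real ^ 'n"
  assumes "x \<noteq> 0" "(F has_real_derivative D) (at (norm x))"
  shows "norm (grad (\<lambda>y. F (norm y)) x) = \<bar>D\<bar>"
  using grad_eqI[OF GDERIV_DERIV_compose[OF GDERIV_norm assms(2)]] assms(1)
  by (simp add: norm_sgn)

definition u_trunc_prof :: "real \<Rightarrow> real \<Rightarrow> real \<Rightarrow> real \<Rightarrow> real \<Rightarrow> real" where
  "u_trunc_prof N p \<epsilon> \<alpha> r = (if r \<le> 1 / \<epsilon> then U_prof N p \<alpha> r - U_prof N p \<alpha> (1 / \<epsilon>) else 0)"

definition u_trunc_prof_deriv :: "real \<Rightarrow> real \<Rightarrow> real \<Rightarrow> real \<Rightarrow> real \<Rightarrow> real" where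
  "u_trunc_prof_deriv N p \<epsilon> \<alpha> r = (if r < 1 / \<epsilon> then U_prof_deriv N p \<alpha> r else 0)"

lemma u_trunc_eq_prof: "u_trunc N p \<epsilon> \<alpha> x = u_trunc_prof N p \<epsilon> \<alpha> (norm x)"
  by (simp add: u_trunc_def u_trunc_prof_def)

lemma u_trunc_prof_has_real_derivative:
  assumes "1 < p" "p < N" "0 < \<alpha>" "0 < r" "r \<noteq> 1 / \<epsilon>"
  shows "(u_trunc_prof N p \<epsilon> \<alpha> has_real_derivative u_trunc_prof_deriv N p \<epsilon> \<alpha> r) (at r)"
proof (cases "r < 1 / \<epsilon>")
  case True
  have "((\<lambda>t. U_prof N p \<alpha> t - U_prof N p \<alpha> (1 / \<epsilon>)) has_real_derivative U_prof_deriv N p \<alpha> r) (at r)"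
    using DERIV_diff[OF U_prof_has_real_derivative[OF assms(1-4)] DERIV_const] by simp
  then have "(u_trunc_prof N p \<epsilon> \<alpha> has_real_derivative U_prof_deriv N p \<alpha> r) (at r)"
    by (rule has_field_derivative_transform_within_open[OF _ open_lessThan])
      (use True in \<open>auto simp: u_trunc_prof_def\<close>)
  with True show ?thesis
    by (simp add: u_trunc_prof_deriv_def)
next
  case False
  with assms(5) have "1 / \<epsilon> < r"
    by simp
  have "(u_trunc_prof N p \<epsilon> \<alpha> has_real_derivative 0) (at r)"
    by (rule has_field_derivative_transform_within_open[OF DERIV_const open_greaterThan])
      (use \<open>1 / \<epsilon> < r\<close> in \<open>auto simp: u_trunc_prof_def\<close>)
  with False show ?thesis
    by (simp add: u_trunc_prof_deriv_def)
qed

lemma norm_grad_u_trunc_minus_U_fun: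
  fixes x :: "real ^ 'n"
  assumes "1 < p" "p < N" "0 < \<beta>" "0 < \<alpha>" "x \<noteq> 0" "norm x \<noteq> 1 / \<epsilon>"
  shows "norm (grad (\<lambda>y. u_trunc N p \<epsilon> \<beta> y - U_fun N p \<alpha> y) x) =
    \<bar>u_trunc_prof_deriv N p \<epsilon> \<beta> (norm x) - U_prof_deriv N p \<alpha> (norm x)\<bar>"
proof -
  define F where "F r = u_trunc_prof N p \<epsilon> \<beta> r - U_prof N p \<alpha> r" for r
  have radial: "(\<lambda>y. u_trunc N p \<epsilon> \<beta> y - U_fun N p \<alpha> y) = (\<lambda>y. F (norm y))"
    by (simp add: F_def u_trunc_eq_prof U_fun_def)
  have "0 < norm x"
    using assms(5) by simp
  then have "(F has_real_derivative
      u_trunc_prof_deriv N p \<epsilon> \<beta> (norm x) - U_prof_deriv N p \<alpha> (norm x)) (at (norm x))"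
    unfolding F_def[abs_def]
    by (intro DERIV_diff u_trunc_prof_has_real_derivative U_prof_has_real_derivative)
      (use assms in auto)
  then show ?thesis
    unfolding radial by (rule norm_grad_radial[OF assms(5)])
qed

lemma AE_norm_neq: "AE x in lborel. norm (x::'a::euclidean_space) \<noteq> R"
proof -
  have "sphere (0::'a) R \<in> sets borel"
    by (simp add: borel_closed)
  moreover have "sphere (0::'a) R \<in> null_sets lebesgue"
    using negligible_sphere[of "0::'a" R] by (simp add: negligible_iff_null_sets)
  ultimately have "sphere (0::'a) R \<in> null_sets lborel"
    by (simp add: null_sets_completion_iff)
  from AE_not_in[OF this] show ?thesis
    by eventually_elim simp
qed

lemma nn_integral_tendsto_0_dominated:
  fixes f :: "nat \<Rightarrow> 'a \<Rightarrow> real"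
  assumes [measurable]: "\<And>n. f n \<in> borel_measurable M" "w \<in> borel_measurable M"
    and "(\<integral>\<^sup>+x. w x \<partial>M) < \<infinity>"
    and "eventually (\<lambda>n. AE x in M. \<bar>f n x\<bar> \<le> w x) sequentially"
    and "AE x in M. (\<lambda>n. f n x) \<longlonglongrightarrow> 0"
  shows "(\<lambda>n. \<integral>\<^sup>+x. ennreal \<bar>f n x\<bar> \<partial>M) \<longlonglongrightarrow> 0"
proof -
  obtain n\<^sub>0 where bound: "\<And>n. n \<ge> n\<^sub>0 \<Longrightarrow> AE x in M. \<bar>f n x\<bar> \<le> w x"
    using assms(4) unfolding eventually_sequentially by blast
  have "(\<lambda>j. \<integral>\<^sup>+x. norm (0 - f (j + n\<^sub>0) x) \<partial>M) \<longlonglongrightarrow> 0"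
  proof (rule nn_integral_dominated_convergence_norm)
    show "AE x in M. norm (f (j + n\<^sub>0) x) \<le> w x" for j
      using bound[of "j + n\<^sub>0"] by simp
    show "AE x in M. (\<lambda>j. f (j + n\<^sub>0) x) \<longlonglongrightarrow> 0"
      using assms(5) by eventually_elim (rule LIMSEQ_ignore_initial_segment)
  qed (use assms(3) in simp_all)
  then have "(\<lambda>j. \<integral>\<^sup>+x. ennreal \<bar>f (j + n\<^sub>0) x\<bar> \<partial>M) \<longlonglongrightarrow> 0"
    by simp
  then show ?thesis
    by (rule LIMSEQ_offset)
qed

lemma grad_Lp_norm_tendsto_0I:
  assumes "0 < p"
    and "(\<lambda>n. \<integral>\<^sup>+x. ennreal (norm (grad (g n) x) powr p) \<partial>lborel) \<longlonglongrightarrow> 0"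
  shows "(\<lambda>n. grad_Lp_norm p (g n)) \<longlonglongrightarrow> 0"
proof -
  define I where "I n = (\<integral>\<^sup>+x. ennreal (norm (grad (g n) x) powr p) \<partial>lborel)" for n
  have "I \<longlonglongrightarrow> 0"
    using assms(2) unfolding I_def .
  then have "eventually (\<lambda>n. I n < \<infinity>) sequentially"
    by (rule order_tendstoD) simp
  then have "eventually (\<lambda>n. grad_Lp_norm p (g n) = ennreal (enn2real (I n) powr (1 / p))) sequentially"
    by eventually_elim (simp add: grad_Lp_norm_def I_def Let_def)
  moreover have "(\<lambda>n. ennreal (enn2real (I n) powr (1 / p))) \<longlonglongrightarrow> ennreal 0"
  proof (intro tendsto_ennrealI tendsto_zero_powrI[where b = "1 / p"])
    show "(\<lambda>n. enn2real (I n)) \<longlonglongrightarrow> 0"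
      using tendsto_enn2real[of I 0] \<open>I \<longlonglongrightarrow> 0\<close> by simp
  qed (use assms(1) in auto)
  ultimately show ?thesis
    by (simp add: tendsto_cong)
qed

lemma nn_integral_grad_majorant_finite:
  assumes "1 < p" "p < real CARD('n)" "0 \<le> K"
  shows "(\<integral>\<^sup>+x. ennreal ((K * (2 / (1 + norm (x::real ^ 'n))) powr
      ((real CARD('n) - p) / (p - 1) + 1)) powr p) \<partial>lborel) < \<infinity>"
proof -
  define s where "s = ((real CARD('n) - p) / (p - 1) + 1) * p"
  have "real DIM(real ^ 'n) < s"
    using assms unfolding s_def by (simp add: field_simps)
  from nn_integral_decay_euclidean_finite[OF this]
  have "(\<integral>\<^sup>+x. ennreal (K powr p) * ennreal ((2 / (1 + norm (x::real ^ 'n))) powr s) \<partial>lborel) < \<infinity>"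
    by (simp add: nn_integral_cmult ennreal_mult_less_top)
  moreover have "(K * (2 / (1 + norm x)) powr ((real CARD('n) - p) / (p - 1) + 1)) powr p
      = K powr p * (2 / (1 + norm x)) powr s" for x :: "real ^ 'n"
    using assms(3) by (simp add: s_def powr_mult powr_powr)
  ultimately show ?thesis
    by (simp add: ennreal_mult)
qed

lemma eventually_C_const_le:
  assumes "1 < p" "p < N" "\<alpha>s \<longlonglongrightarrow> \<alpha>" "0 < \<alpha>"
  shows "eventually (\<lambda>n. 0 < \<alpha>s n \<and> C_const N p (\<alpha>s n) \<le> C_const N p \<alpha> + 1) sequentially"
proof -
  have "eventually (\<lambda>n. 0 < \<alpha>s n) sequentially"
    using assms(3,4) by (rule order_tendstoD)
  moreover have "eventually (\<lambda>n. C_const N p (\<alpha>s n) < C_const N p \<alpha> + 1) sequentially"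
    using isCont_tendsto_compose[OF isCont_C_const[OF assms(1,2,4)] assms(3)]
    by (rule order_tendstoD) simp
  ultimately show ?thesis
    by eventually_elim simp
qed

lemma abs_u_trunc_prof_deriv_minus_U_prof_deriv_le:
  assumes "1 < p" "p < N" "0 < \<beta>" "0 < \<alpha>" "C_const N p \<beta> \<le> c" "C_const N p \<alpha> \<le> c" "0 < r"
  shows "\<bar>u_trunc_prof_deriv N p \<epsilon> \<beta> r - U_prof_deriv N p \<alpha> r\<bar>
    \<le> 2 * ((N - p) / (p - 1)) * c * (2 / (1 + r)) powr ((N - p) / (p - 1) + 1)"
proof -
  define k where "k = (N - p) / (p - 1)"
  define B where "B = (2 / (1 + r)) powr (k + 1)"
  have U_prof_deriv_le: "\<bar>U_prof_deriv N p a r\<bar> \<le> k * c * B"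
    if "0 < a" "C_const N p a \<le> c" for a
  proof -
    have "\<bar>U_prof_deriv N p a r\<bar> \<le> k * C_const N p a * B"
      using abs_U_prof_deriv_le[OF assms(1,2) \<open>0 < a\<close> assms(7)] by (simp add: k_def B_def)
    also have "\<dots> \<le> k * c * B"
      using that assms(1,2) by (intro mult_right_mono mult_left_mono) (auto simp: k_def B_def)
    finally show ?thesis .
  qed
  have "\<bar>u_trunc_prof_deriv N p \<epsilon> \<beta> r - U_prof_deriv N p \<alpha> r\<bar>
      \<le> \<bar>U_prof_deriv N p \<beta> r\<bar> + \<bar>U_prof_deriv N p \<alpha> r\<bar>"
    by (simp add: u_trunc_prof_deriv_def abs_triangle_ineq4)
  also have "\<dots> \<le> 2 * k * c * B"
    using U_prof_deriv_le[of \<beta>] U_prof_deriv_le[of \<alpha>] assms by simp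
  finally show ?thesis
    unfolding k_def B_def .
qed

lemma u_trunc_prof_deriv_tendsto:
  assumes "1 < p" "p < N" "\<alpha>s \<longlonglongrightarrow> \<alpha>" "0 < \<alpha>" "\<And>n. 0 < \<epsilon>s n" "\<epsilon>s \<longlonglongrightarrow> 0" "0 < r"
  shows "(\<lambda>n. u_trunc_prof_deriv N p (\<epsilon>s n) (\<alpha>s n) r) \<longlonglongrightarrow> U_prof_deriv N p \<alpha> r"
proof -
  have "(\<lambda>n. U_prof_deriv N p (\<alpha>s n) r) \<longlonglongrightarrow> U_prof_deriv N p \<alpha> r"
    using isCont_tendsto_compose[OF isCont_U_prof_deriv[OF assms(1,2,4,7)] assms(3)] .
  moreover have "eventually (\<lambda>n. \<epsilon>s n < 1 / r) sequentially"
    using assms(6,7) by (intro order_tendstoD) auto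
  then have "eventually (\<lambda>n. U_prof_deriv N p (\<alpha>s n) r = u_trunc_prof_deriv N p (\<epsilon>s n) (\<alpha>s n) r)
      sequentially"
    by eventually_elim (use assms(5,7) in \<open>simp add: u_trunc_prof_deriv_def field_simps\<close>)
  ultimately show ?thesis
    by (rule Lim_transform_eventually)
qed

lemma nn_integral_grad_u_trunc_minus_U_fun:
  assumes "1 < p" "p < N" "0 < \<beta>" "0 < \<alpha>"
  shows "(\<integral>\<^sup>+x. ennreal (norm (grad (\<lambda>x::real ^ 'n. u_trunc N p \<epsilon> \<beta> x - U_fun N p \<alpha> x) x) powr p)
      \<partial>lborel)
    = (\<integral>\<^sup>+x. ennreal (\<bar>u_trunc_prof_deriv N p \<epsilon> \<beta> (norm x) - U_prof_deriv N p \<alpha> (norm x)\<bar> powr p)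
      \<partial>(lborel :: (real ^ 'n) measure))"
proof (rule nn_integral_cong_AE)
  from AE_norm_neq[of 0] AE_norm_neq[of "1 / \<epsilon>"]
  show "AE x in lborel. ennreal (norm (grad (\<lambda>x::real ^ 'n. u_trunc N p \<epsilon> \<beta> x - U_fun N p \<alpha> x) x) powr p)
    = ennreal (\<bar>u_trunc_prof_deriv N p \<epsilon> \<beta> (norm x) - U_prof_deriv N p \<alpha> (norm x)\<bar> powr p)"
    by eventually_elim (use assms in \<open>simp add: norm_grad_u_trunc_minus_U_fun\<close>)
qed

lemma grad_Lp_norm_u_trunc_minus_U_fun_tendsto_0:
  fixes \<alpha>s \<epsilon>s :: "nat \<Rightarrow> real"
  defines "N \<equiv> real CARD('n)"
  assumes "1 < p" "p < N" "\<alpha>s \<longlonglongrightarrow> \<alpha>" "0 < \<alpha>" "\<And>n. 0 < \<epsilon>s n" "\<epsilon>s \<longlonglongrightarrow> 0"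
  shows "(\<lambda>n. grad_Lp_norm p (\<lambda>x::real ^ 'n. u_trunc N p (\<epsilon>s n) (\<alpha>s n) x - U_fun N p \<alpha> x))
    \<longlonglongrightarrow> 0"
proof -
  define k where "k = (N - p) / (p - 1)"
  define c where "c = C_const N p \<alpha> + 1"
  define f where "f n x = \<bar>u_trunc_prof_deriv N p (\<epsilon>s n) (\<alpha>s n) (norm x)
    - U_prof_deriv N p \<alpha> (norm x)\<bar> powr p" for n and x :: "real ^ 'n"
  define w where "w x = (2 * k * c * (2 / (1 + norm x)) powr (k + 1)) powr p" for x :: "real ^ 'n"
  note good = eventually_C_const_le[OF assms(2,3,4,5), folded c_def]
  have "eventually (\<lambda>n. (\<integral>\<^sup>+x. ennreal (norm (grad (\<lambda>x::real ^ 'n. u_trunc N p (\<epsilon>s n) (\<alpha>s n) x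
      - U_fun N p \<alpha> x) x) powr p) \<partial>lborel) = (\<integral>\<^sup>+x. ennreal \<bar>f n x\<bar> \<partial>lborel)) sequentially"
    using good by eventually_elim (use assms in \<open>simp add: f_def nn_integral_grad_u_trunc_minus_U_fun\<close>)
  moreover have "(\<lambda>n. \<integral>\<^sup>+x. ennreal \<bar>f n x\<bar> \<partial>lborel) \<longlonglongrightarrow> 0"
  proof (rule nn_integral_tendsto_0_dominated)
    show "f n \<in> borel_measurable lborel" for n
      unfolding f_def u_trunc_prof_deriv_def U_prof_deriv_def by measurable
    show "w \<in> borel_measurable lborel"
      unfolding w_def by measurable
    show "(\<integral>\<^sup>+x. ennreal (w x) \<partial>lborel) < \<infinity>"
      using nn_integral_grad_majorant_finite[of p "2 * k * c"] assms C_const_pos[of p N \<alpha>]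
      by (simp add: w_def k_def c_def)
    show "eventually (\<lambda>n. AE x in lborel. \<bar>f n x\<bar> \<le> w x) sequentially"
      using good
    proof (rule eventually_mono)
      fix n assume n: "0 < \<alpha>s n \<and> C_const N p (\<alpha>s n) \<le> c"
      from AE_norm_neq[of 0] show "AE x in lborel. \<bar>f n x\<bar> \<le> w x"
      proof eventually_elim
        case (elim x)
        have "\<bar>u_trunc_prof_deriv N p (\<epsilon>s n) (\<alpha>s n) (norm x) - U_prof_deriv N p \<alpha> (norm x)\<bar>
            \<le> 2 * k * c * (2 / (1 + norm x)) powr (k + 1)"
          unfolding k_def
          by (rule abs_u_trunc_prof_deriv_minus_U_prof_deriv_le) (use assms n elim in \<open>auto simp: c_def\<close>)
        then show ?case
          unfolding f_def w_def using assms(2) by (simp add: powr_mono2)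
      qed
    qed
    show "AE x in lborel. (\<lambda>n. f n x) \<longlonglongrightarrow> 0"
      using AE_norm_neq[of 0]
    proof eventually_elim
      case (elim x)
      then show ?case
        using u_trunc_prof_deriv_tendsto[OF assms(2-7), of "norm x"] assms(2)
        unfolding f_def by (intro tendsto_zero_powrI[where b = p] tendsto_rabs_zero LIM_zero) auto
    qed
  qed
  ultimately show ?thesis
    using assms(2) by (intro grad_Lp_norm_tendsto_0I) (auto simp: tendsto_cong)
qed

lemma weighted_U_prof_tail_le:
  assumes "1 < p" "p < N" "0 < \<alpha>" "C_const N p \<alpha> \<le> c" "0 \<le> \<gamma>" "\<gamma> < (N - p) / (p - 1)"
    and "1 \<le> R" "R \<le> r"
  shows "(1 + r) powr \<gamma> * U_prof N p \<alpha> r \<le> 2 powr \<gamma> * c * R powr (\<gamma> - (N - p) / (p - 1))"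
proof -
  have "(1 + r) powr \<gamma> \<le> 2 powr \<gamma> * r powr \<gamma>"
    using assms powr_mono2[of \<gamma> "1 + r" "2 * r"] by (simp add: powr_mult)
  moreover have "U_prof N p \<alpha> r \<le> C_const N p \<alpha> * r powr (- ((N - p) / (p - 1)))"
    using assms by (intro U_prof_le_powr) auto
  then have "U_prof N p \<alpha> r \<le> c * r powr (- ((N - p) / (p - 1)))"
    using assms by (meson order.trans mult_right_mono powr_ge_zero)
  ultimately have "(1 + r) powr \<gamma> * U_prof N p \<alpha> r
      \<le> (2 powr \<gamma> * r powr \<gamma>) * (c * r powr (- ((N - p) / (p - 1))))"
    using U_prof_nonneg[OF assms(1-3)] by (intro mult_mono) auto
  also have "\<dots> = 2 powr \<gamma> * c * r powr (\<gamma> - (N - p) / (p - 1))"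
    by (simp add: powr_add[symmetric] ac_simps)
  also have "\<dots> \<le> 2 powr \<gamma> * c * R powr (\<gamma> - (N - p) / (p - 1))"
    using assms C_const_pos[of p N \<alpha>] by (intro mult_left_mono powr_mono2') auto
  finally show ?thesis .
qed

lemma eventually_weighted_U_prof_tail_less:
  assumes "1 < p" "p < N" "0 \<le> \<gamma>" "\<gamma> < (N - p) / (p - 1)" "0 < e"
  shows "eventually (\<lambda>T. \<forall>a r. 0 < a \<longrightarrow> C_const N p a \<le> c \<longrightarrow> T \<le> r \<longrightarrow>
    (1 + r) powr \<gamma> * U_prof N p a r < e) at_top"
proof -
  have "((\<lambda>T. 2 powr \<gamma> * c * T powr (\<gamma> - (N - p) / (p - 1))) \<longlongrightarrow> 2 powr \<gamma> * c * 0) at_top"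
    using assms(4) by (intro tendsto_intros tendsto_neg_powr filterlim_ident) auto
  then have "eventually (\<lambda>T. 2 powr \<gamma> * c * T powr (\<gamma> - (N - p) / (p - 1)) < e) at_top"
    using assms(5) by (intro order_tendstoD(2)) auto
  then show ?thesis
    using eventually_ge_at_top[of 1]
    by eventually_elim (use assms in \<open>fastforce dest: weighted_U_prof_tail_le\<close>)
qed

lemma uniform_limit_compact_parameter:
  fixes f :: "'a::metric_space \<Rightarrow> 'b::metric_space \<Rightarrow> 'c::metric_space"
  assumes "continuous_on (A \<times> K) (\<lambda>z. f (fst z) (snd z))" "compact (A \<times> K)"
    and "xs \<longlonglongrightarrow> x" "x \<in> A" "eventually (\<lambda>n. xs n \<in> A) sequentially"
  shows "uniform_limit K (\<lambda>n. f (xs n)) (f x) sequentially"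
  unfolding uniform_limit_iff
proof (intro allI impI)
  fix e :: real assume "0 < e"
  obtain d where "0 < d" and d: "\<And>z z'. z \<in> A \<times> K \<Longrightarrow> z' \<in> A \<times> K \<Longrightarrow> dist z' z < d \<Longrightarrow>
      dist (f (fst z') (snd z')) (f (fst z) (snd z)) < e"
    using compact_uniformly_continuous[OF assms(1,2)] \<open>0 < e\<close>
    unfolding uniformly_continuous_on_def by metis
  from assms(5) tendstoD[OF assms(3) \<open>0 < d\<close>]
  show "eventually (\<lambda>n. \<forall>y\<in>K. dist (f (xs n) y) (f x y) < e) sequentially"
    by eventually_elim (use assms(4) in \<open>auto intro!: d[of "(x, _)" "(xs _, _)", simplified]
      simp: dist_Pair_Pair\<close>)
qed

lemma uniform_limit_weighted_U_prof:
  assumes "1 < p" "p < N" "\<alpha>s \<longlonglongrightarrow> \<alpha>" "0 < \<alpha>" "0 \<le> \<gamma>" "\<gamma> < (N - p) / (p - 1)"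
  shows "uniform_limit {0..} (\<lambda>n r. (1 + r) powr \<gamma> * U_prof N p (\<alpha>s n) r)
    (\<lambda>r. (1 + r) powr \<gamma> * U_prof N p \<alpha> r) sequentially"
proof -
  define W where "W a r = (1 + r) powr \<gamma> * U_prof N p a r" for a r
  define c where "c = C_const N p \<alpha> + 1"
  have "uniform_limit {0..} (\<lambda>n. W (\<alpha>s n)) (W \<alpha>) sequentially"
    unfolding uniform_limit_iff
  proof (intro allI impI)
    fix e :: real assume "0 < e"
    obtain T where tail: "\<And>a r. 0 < a \<Longrightarrow> C_const N p a \<le> c \<Longrightarrow> T \<le> r \<Longrightarrow> W a r < e / 2"
      using eventually_weighted_U_prof_tail_less[OF assms(1,2,5,6), of "e / 2" c] \<open>0 < e\<close>
      unfolding W_def eventually_at_top_linorder by auto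
    have "eventually (\<lambda>n. \<alpha>s n \<in> {\<alpha> / 2..2 * \<alpha>}) sequentially"
      using order_tendstoD[OF assms(3), of "\<alpha> / 2"] order_tendstoD[OF assms(3), of "2 * \<alpha>"] assms(4)
      by (auto elim: eventually_elim2)
    then have "uniform_limit {0..T} (\<lambda>n. W (\<alpha>s n)) (W \<alpha>) sequentially"
      unfolding W_def using assms
      by (intro uniform_limit_compact_parameter[where A = "{\<alpha> / 2..2 * \<alpha>}"]
          continuous_on_weighted_U_prof compact_Times) auto
    with \<open>0 < e\<close> have "eventually (\<lambda>n. \<forall>r\<in>{0..T}. dist (W (\<alpha>s n) r) (W \<alpha> r) < e) sequentially"
      unfolding uniform_limit_iff by blast
    with eventually_C_const_le[OF assms(1-4)]
    show "eventually (\<lambda>n. \<forall>r\<in>{0..}. dist (W (\<alpha>s n) r) (W \<alpha> r) < e) sequentially"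
    proof eventually_elim
      case (elim n)
      show ?case
      proof
        fix r :: real assume "r \<in> {0..}"
        show "dist (W (\<alpha>s n) r) (W \<alpha> r) < e"
        proof (cases "r \<le> T")
          case True
          with elim(2) \<open>r \<in> {0..}\<close> show ?thesis
            by simp
        next
          case False
          then have "W (\<alpha>s n) r < e / 2" "W \<alpha> r < e / 2"
            using tail elim(1) assms(4) by (auto simp: c_def)
          moreover have "0 \<le> W (\<alpha>s n) r" "0 \<le> W \<alpha> r"
            unfolding W_def using U_prof_nonneg[of p N] elim(1) assms by simp_all
          ultimately show ?thesis
            by (simp add: dist_real_def abs_diff_less_iff)
        qed
      qed
    qed
  qed
  then show ?thesis
    by (simp add: W_def[abs_def])
qed

lemma weighted_u_trunc_prof_minus_U_prof_le:
  fixes \<epsilon> R :: real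
  defines "R \<equiv> 1 / \<epsilon>"
  assumes "1 < p" "p < N" "0 < \<beta>" "0 < \<alpha>" "C_const N p \<beta> \<le> c" "C_const N p \<alpha> \<le> c"
    and "0 \<le> \<gamma>" "\<gamma> < (N - p) / (p - 1)" "1 \<le> R" "0 \<le> r"
    and close: "\<bar>(1 + r) powr \<gamma> * U_prof N p \<beta> r - (1 + r) powr \<gamma> * U_prof N p \<alpha> r\<bar> \<le> \<delta>"
  shows "(1 + r) powr \<gamma> * \<bar>u_trunc_prof N p \<epsilon> \<beta> r - U_prof N p \<alpha> r\<bar>
    \<le> \<delta> + 2 powr \<gamma> * c * R powr (\<gamma> - (N - p) / (p - 1))"
proof (cases "r \<le> R")
  case True
  have "(1 + r) powr \<gamma> * U_prof N p \<beta> R \<le> (1 + R) powr \<gamma> * U_prof N p \<beta> R"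
    using True assms U_prof_nonneg[of p N \<beta>] by (intro mult_right_mono powr_mono2) auto
  also have "\<dots> \<le> 2 powr \<gamma> * c * R powr (\<gamma> - (N - p) / (p - 1))"
    using assms by (intro weighted_U_prof_tail_le) auto
  finally have "(1 + r) powr \<gamma> * U_prof N p \<beta> R \<le> 2 powr \<gamma> * c * R powr (\<gamma> - (N - p) / (p - 1))" .
  moreover have "\<bar>(U_prof N p \<beta> r - U_prof N p \<beta> R) - U_prof N p \<alpha> r\<bar>
      \<le> \<bar>U_prof N p \<beta> r - U_prof N p \<alpha> r\<bar> + U_prof N p \<beta> R"
    using U_prof_nonneg[of p N \<beta> R] assms by arith
  then have "(1 + r) powr \<gamma> * \<bar>(U_prof N p \<beta> r - U_prof N p \<beta> R) - U_prof N p \<alpha> r\<bar>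
      \<le> \<bar>(1 + r) powr \<gamma> * U_prof N p \<beta> r - (1 + r) powr \<gamma> * U_prof N p \<alpha> r\<bar>
        + (1 + r) powr \<gamma> * U_prof N p \<beta> R"
    by (subst right_diff_distrib[symmetric]) (simp add: abs_mult distrib_left[symmetric] mult_left_mono)
  ultimately show ?thesis
    using True close by (simp add: u_trunc_prof_def R_def)
next
  case False
  have "(1 + r) powr \<gamma> * U_prof N p \<alpha> r \<le> 2 powr \<gamma> * c * R powr (\<gamma> - (N - p) / (p - 1))"
    using False assms by (intro weighted_U_prof_tail_le) auto
  moreover have "0 \<le> \<delta>"
    using close by linarith
  ultimately show ?thesis
    using False U_prof_nonneg[of p N \<alpha> r] assms by (simp add: u_trunc_prof_def R_def)
qed

lemma weighted_norm_u_trunc_minus_U_fun_tendsto_0: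
  assumes "1 < p" "p < N" "\<alpha>s \<longlonglongrightarrow> \<alpha>" "0 < \<alpha>" "\<And>n. 0 < \<epsilon>s n" "\<epsilon>s \<longlonglongrightarrow> 0"
    and "0 \<le> \<gamma>" "\<gamma> < (N - p) / (p - 1)"
  shows "(\<lambda>n. weighted_norm \<gamma> (\<lambda>x::real ^ 'n. u_trunc N p (\<epsilon>s n) (\<alpha>s n) x - U_fun N p \<alpha> x))
    \<longlonglongrightarrow> 0"
proof (rule tendsto_zero_ennreal)
  fix e :: real assume "0 < e"
  define k where "k = (N - p) / (p - 1)"
  define c where "c = C_const N p \<alpha> + 1"
  define R where "R n = 1 / \<epsilon>s n" for n
  have R_at_top: "filterlim R at_top sequentially"
    unfolding R_def using assms(5,6) by (simp add: filterlim_inverse_at_top inverse_eq_divide[symmetric])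
  have "eventually (\<lambda>n. 2 powr \<gamma> * c * R n powr (\<gamma> - k) < e / 2) sequentially"
    using \<open>0 < e\<close> assms(8) unfolding k_def
    by (intro order_tendstoD(2)[of _ "2 powr \<gamma> * c * 0"] tendsto_intros tendsto_neg_powr R_at_top) auto
  moreover have "eventually (\<lambda>n. 1 \<le> R n) sequentially"
    using R_at_top by (simp add: filterlim_at_top)
  moreover note eventually_C_const_le[OF assms(1-4), folded c_def]
  moreover have "eventually (\<lambda>n. \<forall>r\<in>{0..}. dist ((1 + r) powr \<gamma> * U_prof N p (\<alpha>s n) r)
      ((1 + r) powr \<gamma> * U_prof N p \<alpha> r) < e / 2) sequentially"
    using uniform_limit_weighted_U_prof[OF assms(1-4,7,8)] half_gt_zero[OF \<open>0 < e\<close>]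
    unfolding uniform_limit_iff by blast
  ultimately show "eventually (\<lambda>n. weighted_norm \<gamma>
      (\<lambda>x::real ^ 'n. u_trunc N p (\<epsilon>s n) (\<alpha>s n) x - U_fun N p \<alpha> x) < ennreal e) sequentially"
  proof eventually_elim
    case (elim n)
    have "(1 + norm x) powr \<gamma> * \<bar>u_trunc N p (\<epsilon>s n) (\<alpha>s n) x - U_fun N p \<alpha> x\<bar>
        \<le> e / 2 + 2 powr \<gamma> * c * R n powr (\<gamma> - k)" for x :: "real ^ 'n"
    proof -
      have "\<bar>(1 + norm x) powr \<gamma> * U_prof N p (\<alpha>s n) (norm x) - (1 + norm x) powr \<gamma> * U_prof N p \<alpha> (norm x)\<bar>
          \<le> e / 2"
        using bspec[OF elim(4), of "norm x"] by (simp add: dist_real_def)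
      then show ?thesis
        unfolding u_trunc_eq_prof U_fun_def R_def k_def
        by (rule weighted_u_trunc_prof_minus_U_prof_le[rotated -1])
          (use elim assms C_const_pos[of p N \<alpha>] in \<open>auto simp: R_def c_def\<close>)
    qed
    then have "weighted_norm \<gamma> (\<lambda>x::real ^ 'n. u_trunc N p (\<epsilon>s n) (\<alpha>s n) x - U_fun N p \<alpha> x)
        \<le> ennreal (e / 2 + 2 powr \<gamma> * c * R n powr (\<gamma> - k))"
      unfolding weighted_norm_def by (intro SUP_least ennreal_leI)
    also have "\<dots> < ennreal e"
      using elim \<open>0 < e\<close> by (simp add: ennreal_lessI)
    finally show ?case .
  qed
qed

theorem proposition3p2:
  fixes p \<alpha> \<gamma> :: real and \<alpha>s \<epsilon>s :: "nat \<Rightarrow> real"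
  defines "N \<equiv> real CARD('n)"
  assumes "CARD('n) \<ge> 2"
    and "1 < p" and "p < N"
    and "N * (N - p) / (N * p - (N - p)) < \<gamma>" and "\<gamma> < (N - p) / (p - 1)"
    and "\<alpha>s \<longlonglongrightarrow> \<alpha>" and "\<alpha> > 0"
    and "\<And>n. \<epsilon>s n > 0" and "\<epsilon>s \<longlonglongrightarrow> 0"
  shows "(\<lambda>n. X_norm p \<gamma>
            (\<lambda>x::real ^ 'n. u_trunc N p (\<epsilon>s n) (\<alpha>s n) x - U_fun N p \<alpha> x))
         \<longlonglongrightarrow> 0"
proof -
  have "0 < N"
    by (simp add: N_def)
  then have "0 < N * (p - 1)" "0 < N * (N - p)"
    using assms(3,4) by simp_all
  moreover have "N * p - (N - p) = N * (p - 1) + p"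
    by (simp add: algebra_simps)
  ultimately have "0 < N * (N - p) / (N * p - (N - p))"
    using assms(3) by simp
  then have "0 < \<gamma>"
    using assms(5) by linarith
  have "(\<lambda>n. grad_Lp_norm p (\<lambda>x::real ^ 'n. u_trunc N p (\<epsilon>s n) (\<alpha>s n) x - U_fun N p \<alpha> x))
      \<longlonglongrightarrow> 0"
    unfolding N_def by (rule grad_Lp_norm_u_trunc_minus_U_fun_tendsto_0) (use assms in \<open>simp_all add: N_def\<close>)
  moreover have "(\<lambda>n. weighted_norm \<gamma> (\<lambda>x::real ^ 'n. u_trunc N p (\<epsilon>s n) (\<alpha>s n) x - U_fun N p \<alpha> x))
      \<longlonglongrightarrow> 0"
    using assms(3,4,6-10) \<open>0 < \<gamma>\<close> by (intro weighted_norm_u_trunc_minus_U_fun_tendsto_0) auto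
  ultimately show ?thesis
    unfolding X_norm_def using tendsto_max by fastforce
qed

end
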